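(* Let $R$ be an associative ring with identity and $a,b,c,d\in R$ such that $a$ has a $(b,c)$-inverse $a^{\|(b,c)}$. Let $c^{-}$ be any (fixed) inner inverse of $c$ and put $f=c^{-}c$. Then the following are equivalent: (i) $d$ has a $(b,c)$-inverse; (ii) $f\in fda^{\|(b,c)}fR\cap Rfda^{\|(b,c)}f$; (iii) $fda^{\|(b,c)}+1-f$ is invertible in $R$. In this case $d^{\|(b,c)}=a^{\|(b,c)}(fda^{\|(b,c)}+1-f)^{-1}$.
   Context: For $a,b,c\in R$, $a$ is $(b,c)$-invertible if there exists $y\in R$ with $y\in (bRy)\cap(yRc)$, $yab=b$ and $cay=c$; such $y$ is unique and denoted $a^{\|(b,c)}$. An inner inverse of $c$ is an element $c^{-}$ with $cc^{-}c=c$ (it exists here since $c$ is regular whenever a $(b,c)$-inverse exists). *)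

theory Defs
  imports Main
begin

definition is_bc_inverse :: "'a::ring_1 \<Rightarrow> 'a \<Rightarrow> 'a \<Rightarrow> 'a \<Rightarrow> bool" where
  "is_bc_inverse a b c y \<longleftrightarrow>
     (\<exists>x. y = b * x * y) \<and> (\<exists>x. y = y * x * c) \<and> y * a * b = b \<and> c * a * y = c"

definition bc_invertible :: "'a::ring_1 \<Rightarrow> 'a \<Rightarrow> 'a \<Rightarrow> bool" where
  "bc_invertible a b c \<longleftrightarrow> (\<exists>y. is_bc_inverse a b c y)"

definition bc_inv :: "'a::ring_1 \<Rightarrow> 'a \<Rightarrow> 'a \<Rightarrow> 'a" where
  "bc_inv a b c = (THE y. is_bc_inverse a b c y)"

definition ring_invertible :: "'a::ring_1 \<Rightarrow> bool" where
  "ring_invertible u \<longleftrightarrow> (\<exists>v. u * v = 1 \<and> v * u = 1)"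

definition ring_inv :: "'a::ring_1 \<Rightarrow> 'a" where
  "ring_inv u = (THE v. u * v = 1 \<and> v * u = 1)"

end

theory Submission
  imports Defs
begin

text \<open>Let \<open>y\<close> be the \<open>(b,c)\<close>-inverse of \<open>a\<close> and \<open>w = f d y\<close>. Since \<open>y f = y\<close>, the element
  \<open>w\<close> lies in the corner ring \<open>fRf\<close>, whose identity is \<open>f\<close>, and \<open>w + 1 - f\<close> is a unit of \<open>R\<close>
  exactly when \<open>w\<close> is a unit of \<open>fRf\<close>, i.e. when \<open>f \<in> wR \<inter> Rw\<close>. If \<open>d\<close> has a
  \<open>(b,c)\<close>-inverse \<open>z\<close>, then \<open>f a z\<close> inverts \<open>w\<close> in \<open>fRf\<close>; conversely, if \<open>v\<close> inverts
  \<open>w + 1 - f\<close>, the defining conditions of a \<open>(b,c)\<close>-inverse of \<open>d\<close> hold for \<open>y v\<close>, because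
  \<open>v\<close> acts as the identity on \<open>(1 - f)R\<close> and \<open>c f = c\<close>.\<close>

lemma is_bc_inverse_absorb_left:
  fixes a b c y x :: "'a::ring_1"
  assumes "is_bc_inverse a b c y"
  shows "y * a * (b * x) = b * x"
proof -
  have "y * a * b = b" using assms unfolding is_bc_inverse_def by blast
  then show ?thesis by (metis mult.assoc)
qed

lemma is_bc_inverse_absorb_right:
  fixes a b c y x :: "'a::ring_1"
  assumes "is_bc_inverse a b c y"
  shows "x * c * a * y = x * c"
proof -
  have "c * a * y = c" using assms unfolding is_bc_inverse_def by blast
  then show ?thesis by (metis mult.assoc)
qed

lemma is_bc_inverse_mult_right_eq:
  fixes a b c y e :: "'a::ring_1"
  assumes "is_bc_inverse a b c y" and "c * e = c"
  shows "y * e = y"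
proof -
  obtain x where "y = y * x * c" using assms(1) unfolding is_bc_inverse_def by blast
  then show ?thesis using assms(2) by (metis mult.assoc)
qed

lemma is_bc_inverse_unique:
  fixes a b c y y' :: "'a::ring_1"
  assumes "is_bc_inverse a b c y" and "is_bc_inverse a b c y'"
  shows "y = y'"
proof -
  obtain s where s: "y = y * s * c" using assms(1) unfolding is_bc_inverse_def by blast
  obtain p where p: "y' = b * p * y'" using assms(2) unfolding is_bc_inverse_def by blast
  have "y * a * y' = y'"
    using is_bc_inverse_absorb_left[OF assms(1), of "p * y'"] p by (simp add: mult.assoc)
  moreover have "y * a * y' = y"
    using is_bc_inverse_absorb_right[OF assms(2), of "y * s"] s by simp
  ultimately show ?thesis by simp
qed

lemma bc_inv_eqI:
  fixes a b c y :: "'a::ring_1"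
  assumes "is_bc_inverse a b c y"
  shows "bc_inv a b c = y"
  unfolding bc_inv_def using assms is_bc_inverse_unique by blast

lemma is_bc_inverse_bc_inv:
  fixes a b c :: "'a::ring_1"
  assumes "bc_invertible a b c"
  shows "is_bc_inverse a b c (bc_inv a b c)"
  using assms bc_inv_eqI unfolding bc_invertible_def by metis

lemma left_inverse_eq_right_inverse:
  fixes u v v' :: "'a::ring_1"
  assumes "v' * u = 1" and "u * v = 1"
  shows "v' = v"
proof -
  have "v' = v' * (u * v)" using assms(2) by simp
  also have "\<dots> = (v' * u) * v" by (simp add: mult.assoc)
  finally show ?thesis using assms(1) by simp
qed

lemma ring_inv_eqI:
  fixes u v :: "'a::ring_1"
  assumes "u * v = 1" and "v * u = 1"
  shows "ring_inv u = v"
  unfolding ring_inv_def using assms left_inverse_eq_right_inverse by blast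

lemma corner_shift_mult:
  fixes f w x :: "'a::ring_1"
  assumes "f * f = f" "f * w = w" "w * f = w"
  shows "(w + 1 - f) * (f * x) = w * x" and "(x * f) * (w + 1 - f) = x * w"
    and "(w + 1 - f) * (1 - f) = 1 - f" and "(1 - f) * (w + 1 - f) = 1 - f"
  using assms by (simp_all add: ring_distribs mult.assoc[symmetric] mult.assoc[of x])

lemma corner_unit_inverse:
  fixes f w v :: "'a::ring_1"
  assumes corner: "f * f = f" "f * w = w" "w * f = w"
    and uv: "(w + 1 - f) * v = 1" and vu: "v * (w + 1 - f) = 1"
  shows "w * v = f" and "v * w = f" and "v * (1 - f) = 1 - f"
proof -
  have "w * v = (f * (w + 1 - f)) * v"
    using corner_shift_mult(2)[OF corner, of 1] by simp
  then show "w * v = f" using uv by (simp add: mult.assoc)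
  have "v * w = v * ((w + 1 - f) * f)"
    using corner_shift_mult(1)[OF corner, of 1] by simp
  then show "v * w = f" using vu by (simp add: mult.assoc[symmetric])
  have "v * (1 - f) = v * ((w + 1 - f) * (1 - f))"
    using corner_shift_mult(3)[OF corner] by simp
  then show "v * (1 - f) = 1 - f" using vu by (simp add: mult.assoc[symmetric])
qed

lemma corner_unit_iff:
  fixes f w :: "'a::ring_1"
  assumes corner: "f * f = f" "f * w = w" "w * f = w"
  shows "ring_invertible (w + 1 - f) \<longleftrightarrow> (\<exists>t. f = w * t) \<and> (\<exists>s. f = s * w)"
proof
  assume "ring_invertible (w + 1 - f)"
  then obtain v where "(w + 1 - f) * v = 1" "v * (w + 1 - f) = 1"
    unfolding ring_invertible_def by blast
  with corner_unit_inverse[OF corner] show "(\<exists>t. f = w * t) \<and> (\<exists>s. f = s * w)"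
    by metis
next
  assume "(\<exists>t. f = w * t) \<and> (\<exists>s. f = s * w)"
  then obtain t s where t: "w * t = f" and s: "s * w = f" by metis
  have "(w + 1 - f) * (f * (t * f) + (1 - f)) = w * (t * f) + (1 - f)"
    using corner_shift_mult[OF corner] by (simp add: distrib_left)
  also have "\<dots> = 1" using t corner(1) by (simp add: mult.assoc[symmetric])
  finally have right: "(w + 1 - f) * (f * (t * f) + (1 - f)) = 1" .
  have "((f * s) * f + (1 - f)) * (w + 1 - f) = f * s * w + (1 - f)"
    using corner_shift_mult[OF corner] by (simp add: distrib_right)
  also have "\<dots> = 1" using s corner(1) by (simp add: mult.assoc)
  finally have left: "((f * s) * f + (1 - f)) * (w + 1 - f) = 1" .
  show "ring_invertible (w + 1 - f)"
    unfolding ring_invertible_def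
    using left right left_inverse_eq_right_inverse by metis
qed

lemma bc_inverse_imp_corner_divides:
  fixes a b c d cm y z :: "'a::ring_1"
  assumes y: "is_bc_inverse a b c y" and z: "is_bc_inverse d b c z"
    and hcm: "c * cm * c = c"
  shows "cm * c = (cm * c * d * y) * (a * z)"
    and "cm * c = (cm * c * a * z) * (cm * c * d * y)"
proof -
  obtain p where p: "z = b * p * z" using z unfolding is_bc_inverse_def by blast
  obtain x where x: "y = b * x * y" using y unfolding is_bc_inverse_def by blast
  have yaz: "y * a * z = z"
    using is_bc_inverse_absorb_left[OF y, of "p * z"] p by (simp add: mult.assoc)
  have zdy: "z * d * y = y"
    using is_bc_inverse_absorb_left[OF z, of "x * y"] x by (simp add: mult.assoc)
  have zf: "z * (cm * c) = z"
    using is_bc_inverse_mult_right_eq[OF z] hcm by (simp add: mult.assoc)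
  have "(cm * c * d * y) * (a * z) = cm * c * d * z"
    using yaz by (simp add: mult.assoc)
  also have "\<dots> = cm * c" using is_bc_inverse_absorb_right[OF z, of cm] by (simp add: mult.assoc)
  finally show "cm * c = (cm * c * d * y) * (a * z)" by simp
  have "(cm * c * a * z) * (cm * c * d * y) = cm * c * a * (z * (cm * c) * d * y)"
    by (simp add: mult.assoc)
  also have "\<dots> = cm * c * a * y" using zf zdy by simp
  also have "\<dots> = cm * c" using is_bc_inverse_absorb_right[OF y, of cm] by simp
  finally show "cm * c = (cm * c * a * z) * (cm * c * d * y)" by simp
qed

lemma corner_unit_imp_bc_inverse:
  fixes a b c d cm y v :: "'a::ring_1"
  defines "f \<equiv> cm * c"
  assumes y: "is_bc_inverse a b c y" and hcm: "c * cm * c = c"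
    and vw: "v * (f * d * y) = f" and wv: "(f * d * y) * v = f"
    and v1f: "v * (1 - f) = 1 - f"
  shows "is_bc_inverse d b c (y * v)"
proof -
  have cf: "c * f = c" unfolding f_def using hcm by (simp add: mult.assoc)
  have yf: "y * f = y" using is_bc_inverse_mult_right_eq[OF y cf] .
  obtain x where x: "y = b * x * y" using y unfolding is_bc_inverse_def by blast
  have yab: "y * a * b = b" using y unfolding is_bc_inverse_def by blast
  have yvf: "y * v * f = y * v"
  proof -
    have "y * v * (1 - f) = y * (1 - f)" using v1f by (simp add: mult.assoc)
    then show ?thesis using yf by (simp add: right_diff_distrib)
  qed
  have "y * v = b * x * (y * v)" using x by (metis mult.assoc)
  moreover have "y * v = y * v * cm * c" using yvf unfolding f_def by (simp add: mult.assoc)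
  moreover have "y * v * d * b = b"
  proof -
    have "y * v * d * b = y * v * f * d * (y * a * b)" using yvf yab by simp
    also have "\<dots> = y * (v * (f * d * y)) * a * b" by (simp add: mult.assoc)
    also have "\<dots> = b" using vw yf yab by simp
    finally show ?thesis .
  qed
  moreover have "c * d * (y * v) = c"
  proof -
    have "c * d * (y * v) = c * ((f * d * y) * v)" using cf by (metis mult.assoc)
    then show ?thesis using wv cf by simp
  qed
  ultimately show ?thesis unfolding is_bc_inverse_def by blast
qed

theorem theorem3p14:
  fixes a b c d cm f :: "'a::ring_1"
  assumes ha: "bc_invertible a b c"
    and hcm: "c * cm * c = c"
    and hf: "f = cm * c"
  shows "(bc_invertible d b c \<longleftrightarrow>
            f \<in> {f * d * bc_inv a b c * f * r | r. True} \<inter> {r * f * d * bc_inv a b c * f | r. True})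
       \<and> (f \<in> {f * d * bc_inv a b c * f * r | r. True} \<inter> {r * f * d * bc_inv a b c * f | r. True}
            \<longleftrightarrow> ring_invertible (f * d * bc_inv a b c + 1 - f))
       \<and> (bc_invertible d b c \<longrightarrow>
            bc_inv d b c = bc_inv a b c * ring_inv (f * d * bc_inv a b c + 1 - f))"
proof -
  define y where "y = bc_inv a b c"
  define w where "w = f * d * y"
  have y: "is_bc_inverse a b c y" unfolding y_def using is_bc_inverse_bc_inv[OF ha] .
  have ff: "f * f = f" and cf: "c * f = c" using hcm unfolding hf by (simp_all add: mult.assoc)
  have wf: "w * f = w"
    unfolding w_def using is_bc_inverse_mult_right_eq[OF y cf] by (simp add: mult.assoc)
  have fw: "f * w = w" unfolding w_def using ff by (simp add: mult.assoc[symmetric])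
  have reassoc: "f * d * y * f * r = w * r" "r * f * d * y * f = r * w" for r
    using wf unfolding w_def by (simp_all add: mult.assoc)
  have ii_iff: "f \<in> {f * d * y * f * r | r. True} \<inter> {r * f * d * y * f | r. True}
      \<longleftrightarrow> (\<exists>t. f = w * t) \<and> (\<exists>s. f = s * w)"
    unfolding reassoc by blast
  have ii_iii: "(\<exists>t. f = w * t) \<and> (\<exists>s. f = s * w) \<longleftrightarrow> ring_invertible (w + 1 - f)"
    using corner_unit_iff[OF ff fw wf] by simp
  have iii_i: "is_bc_inverse d b c (y * ring_inv (w + 1 - f))"
    if unit: "ring_invertible (w + 1 - f)"
  proof -
    obtain v where uv: "(w + 1 - f) * v = 1" and vu: "v * (w + 1 - f) = 1"
      using unit unfolding ring_invertible_def by blast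
    show ?thesis
      using corner_unit_imp_bc_inverse[OF y hcm] corner_unit_inverse[OF ff fw wf uv vu]
        ring_inv_eqI[OF uv vu]
      unfolding w_def hf by simp
  qed
  have i_ii: "(\<exists>t. f = w * t) \<and> (\<exists>s. f = s * w)" if "bc_invertible d b c"
    using bc_inverse_imp_corner_divides[OF y is_bc_inverse_bc_inv[OF that] hcm]
    unfolding w_def hf by blast
  have i_iii: "bc_invertible d b c \<longleftrightarrow> ring_invertible (w + 1 - f)"
    using i_ii ii_iii iii_i unfolding bc_invertible_def by blast
  have "bc_inv d b c = y * ring_inv (w + 1 - f)" if "bc_invertible d b c"
    using bc_inv_eqI iii_i i_iii that by blast
  then show ?thesis
    unfolding y_def[symmetric] ii_iff ii_iii unfolding w_def[symmetric] using i_iii by blast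
qed

end
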